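(* If $x,y\in X$ are distinct and form an asymptotic pair for $T$ (i.e. $\lim_{n\to\infty}d(T^n(x),T^n(y))=0$), then $\deg(x)$ and $\deg(y)$ are both finite and $|\deg(x)-\deg(y)|\leq1$. In particular, no point $x\neq p$ is asymptotic to $p=(v_{0,0},v_{1,0},v_{2,0},\ldots)$.
   Context: Paths and cycles: a graph is $G=(V,E)$ with $V$ finite and $E\subset V\times V$. A path is a finite sequence of vertices $(u_0,\dots,u_L)$ with $(u_j,u_{j+1})\in E$; its length is $|\cdot|=L$; a cycle is a path with $u_0=u_L$. For paths where one ends where the next starts, $+$ denotes concatenation and $a\,c$ means the cycle $c$ traversed $a$ times. Construction: $G_0=(V_0,E_0)$ with $V_0=\{v_{0,0}\}$, $E_0=\{e_{0,0}\}$, $e_{0,0}=(v_{0,0},v_{0,0})$. For $n\geq1$, $G_n=(V_n,E_n)$ consists of a vertex $v_{n,0}$, the loop $e_{n,0}=(v_{n,0},v_{n,0})$, and $n$ cycles $c_{n,1},\dots,c_{n,n}$, each starting and ending at $v_{n,0}$, whose vertices other than $v_{n,0}$ are pairwise distinct (within each cycle and across cycles); $V_n$ is the set of all these vertices and $E_n$ consists of $e_{n,0}$ and the edges of the cycles. The maps $\varphi_n\colon V_{n+1}\to V_n$ and the lengths of the cycles $c_{n+1,i}$ are defined together: $\varphi_n(v_{n+1,0})=v_{n,0}$, and for each $i$ a path $P_{n,i}$ in $G_n$ from $v_{n,0}$ to $v_{n,0}$ is given; $c_{n+1,i}$ has length $|P_{n,i}|$ and $\varphi_n$ maps its $j$-th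 vertex to the $j$-th vertex of $P_{n,i}$ (written $\varphi_n(c_{n+1,i})=P_{n,i}$). The paths are: $P_{0,1}=10\,e_{0,0}$; for $n\geq1$: $P_{n,i}=e_{n,0}+2c_{n,i}+2c_{n,i+1}+\dots+2c_{n,n}+e_{n,0}$ for $2\leq i\leq n$; $P_{n,n+1}=(n+2)^2\big(\sum_{i=1}^n|c_{n,i}|\big)\,e_{n,0}$; and $P_{n,1}=(1\,e_{n,0}+2c_{n,1})+(2\,e_{n,0}+2c_{n,1})+\dots+(k_n\,e_{n,0}+2c_{n,1})+e_{n,0}+2c_{n,2}+\dots+2c_{n,n}+e_{n,0}$, where $k_n=2\big(1+\sum_{i=1}^n|c_{n,i}|\big)$. Let $X=\{x\in\prod_{n\geq0}V_n:\varphi_n(x_{n+1})=x_n\ \forall n\}$ with metric $d(x,y)=2^{-\min\{i:x_i\neq y_i\}}$ ($d(x,x)=0$); $X$ is a compact zero-dimensional metric space, and $T\colon X\to X$ defined by $T(x)=y$ iff $(x_n,y_n)\in E_n$ for all $n$ is a well-defined homeomorphism. Write $x_n$ for the $n$-th coordinate of $x$. Degree: for $v\in V_n$, $\deg(v)=+\infty$ if $v=v_{n,0}$ and $\deg(v)=i$ if $v$ is a vertex of $c_{n,i}$ different from $v_{n,0}$; for $x\in X$, $\deg(x)=\min_n\deg(x_n)$. *)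

theory Defs
  imports Complex_Main "HOL-Library.Extended_Nat"
begin

text \<open>Vertices of G_n are pairs of naturals: (0,0) is v_{n,0}; (i,j) with 1 \<le> i \<le> n and
  1 \<le> j < |c_{n,i}| is the j-th vertex of the cycle c_{n,i}.  Paths are vertex lists.\<close>

type_synonym vert = "nat \<times> nat"

definition loop :: "vert list" where "loop = [(0,0),(0,0)]"

definition pcat :: "vert list \<Rightarrow> vert list \<Rightarrow> vert list" where
  "pcat p q = p @ tl q"

fun rep :: "nat \<Rightarrow> vert list \<Rightarrow> vert list" where
  "rep 0 c = [hd c]"
| "rep (Suc a) c = pcat c (rep a c)"

definition ccat :: "vert list list \<Rightarrow> vert list" where
  "ccat ps = foldr pcat ps [(0,0)]"

text \<open>The cycle c_{n,i}, given the length function L of the cycles of G_n.\<close>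
definition cycL :: "(nat \<Rightarrow> nat) \<Rightarrow> nat \<Rightarrow> vert list" where
  "cycL L i = (0,0) # map (\<lambda>j. (i,j)) [1..<L i] @ [(0,0)]"

definition Ppath :: "nat \<Rightarrow> (nat \<Rightarrow> nat) \<Rightarrow> nat \<Rightarrow> vert list" where
  "Ppath n L i =
     (let S = (\<Sum>k\<in>{1..n}. L k); kn = 2 * (1 + S) in
      if n = 0 then (if i = 1 then rep 10 loop else [])
      else if i = 1 then
        ccat (map (\<lambda>a. pcat (rep a loop) (rep 2 (cycL L 1))) [1..<kn+1]
              @ [loop] @ map (\<lambda>k. rep 2 (cycL L k)) [2..<n+1] @ [loop])
      else if 2 \<le> i \<and> i \<le> n then
        ccat ([loop] @ map (\<lambda>k. rep 2 (cycL L k)) [i..<n+1] @ [loop])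
      else if i = n + 1 then rep ((n+2)^2 * S) loop
      else [])"

text \<open>clen n i = |c_{n,i}|.\<close>
primrec clen :: "nat \<Rightarrow> nat \<Rightarrow> nat" where
  "clen 0 i = 0"
| "clen (Suc n) i = length (Ppath n (clen n) i) - 1"

definition V :: "nat \<Rightarrow> vert set" where
  "V n = {(0,0)} \<union> {(i,j). 1 \<le> i \<and> i \<le> n \<and> 1 \<le> j \<and> j < clen n i}"

definition path_edges :: "vert list \<Rightarrow> (vert \<times> vert) set" where
  "path_edges xs = set (zip xs (tl xs))"

definition E :: "nat \<Rightarrow> (vert \<times> vert) set" where
  "E n = {((0,0),(0,0))} \<union> (\<Union>i\<in>{1..n}. path_edges (cycL (clen n) i))"

definition phi :: "nat \<Rightarrow> vert \<Rightarrow> vert" where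
  "phi n v = (if v = (0,0) then (0,0) else Ppath n (clen n) (fst v) ! snd v)"

definition X :: "(nat \<Rightarrow> vert) set" where
  "X = {x. \<forall>n. x n \<in> V n \<and> phi n (x (Suc n)) = x n}"

definition dist_X :: "(nat \<Rightarrow> vert) \<Rightarrow> (nat \<Rightarrow> vert) \<Rightarrow> real" where
  "dist_X x y = (if x = y then 0 else (1/2) ^ (LEAST i. x i \<noteq> y i))"

definition T :: "(nat \<Rightarrow> vert) \<Rightarrow> (nat \<Rightarrow> vert)" where
  "T x = (THE y. y \<in> X \<and> (\<forall>n. (x n, y n) \<in> E n))"

definition asymptotic :: "(nat \<Rightarrow> vert) \<Rightarrow> (nat \<Rightarrow> vert) \<Rightarrow> bool" where
  "asymptotic x y \<longleftrightarrow> (\<lambda>k. dist_X ((T ^^ k) x) ((T ^^ k) y)) \<longlonglongrightarrow> 0"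

definition degv :: "vert \<Rightarrow> enat" where
  "degv v = (if v = (0,0) then \<infinity> else enat (fst v))"

definition deg :: "(nat \<Rightarrow> vert) \<Rightarrow> enat" where
  "deg x = (INF n. degv (x n))"

definition p_pt :: "nat \<Rightarrow> vert" where "p_pt = (\<lambda>n. (0,0))"

end

theory Submission
  imports Defs
begin

text \<open>
  Under \<open>T\<close> a non-root coordinate of a point moves one step along its cycle, and the cycle
  index \<open>fst (x n)\<close> is non-increasing in \<open>n\<close> because P_{n,i} only uses the cycles c_{n,k}
  with \<open>k \<ge> i\<close>. Hence every \<open>x \<noteq> p\<close> eventually stays on cycles of one index \<open>d = deg x\<close>,
  this index is preserved by \<open>T\<close>, and all coordinates of \<open>x\<close> below level \<open>d\<close> are the root.
  Conversely, coordinate \<open>d + 1\<close> of some \<open>T\<^sup>k x\<close> is not the root: after its last passage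
  through c_{n,d} the path P_{n,d} runs around c_{n,d+1}, so moving \<open>x\<close> forward on its cycle
  of level \<open>n + 1\<close> reaches a point whose coordinate \<open>d + 1\<close> is \<open>(d + 1, 1)\<close>.
  Since an asymptotic pair eventually agrees in every coordinate, a point of degree \<open>d\<close> is not
  asymptotic to a point of degree \<open>> d + 1\<close>, nor to \<open>p\<close>, whose orbit is constant.
\<close>

section \<open>Closed walks in G_n\<close>

definition cycle_verts :: "nat \<Rightarrow> nat set \<Rightarrow> vert set" where
  "cycle_verts n I = {(0,0)} \<union> {(k,t). k \<in> I \<and> 1 \<le> t \<and> t < clen n k}"

definition closed_walk :: "nat \<Rightarrow> nat set \<Rightarrow> vert list \<Rightarrow> bool" where
  "closed_walk n I p \<longleftrightarrow> p \<noteq> [] \<and> hd p = (0,0) \<and> last p = (0,0) \<and>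
     set p \<subseteq> cycle_verts n I \<and> path_edges p \<subseteq> E n"

lemma path_edges_Cons:
  "path_edges (x # xs) = (if xs = [] then {} else insert (x, hd xs) (path_edges xs))"
  by (cases xs) (auto simp: path_edges_def)

lemma path_edges_nth: "Suc j < length xs \<Longrightarrow> (xs ! j, xs ! Suc j) \<in> path_edges xs"
  unfolding path_edges_def set_zip by (auto simp: nth_tl intro!: exI[of _ j])

lemma path_edges_conv_nth: "path_edges xs = {(xs ! j, xs ! Suc j) | j. Suc j < length xs}"
  unfolding path_edges_def set_zip by (auto simp: nth_tl)

lemma path_edges_pcat:
  assumes "p \<noteq> []" "q \<noteq> []" "last p = hd q"
  shows "path_edges (pcat p q) \<subseteq> path_edges p \<union> path_edges q"
  using assms unfolding pcat_def
proof (induction p)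
  case (Cons a p)
  show ?case
  proof (cases "p = []")
    case True
    then have "[a] @ tl q = q" using Cons.prems by (cases q) auto
    then show ?thesis using True by simp
  qed (use Cons in \<open>auto simp: path_edges_Cons\<close>)
qed simp

lemma closed_walk_pcat:
  assumes "closed_walk n I p" "closed_walk n I q"
  shows "closed_walk n I (pcat p q)"
proof -
  have "last (pcat p q) = (0,0)"
    using assms by (cases "tl q = []") (auto simp: closed_walk_def pcat_def last_tl)
  moreover have "set (pcat p q) \<subseteq> set p \<union> set q"
    by (cases q) (auto simp: pcat_def)
  ultimately show ?thesis
    using assms path_edges_pcat[of p q] by (auto simp: closed_walk_def pcat_def)
qed

lemma closed_walk_root: "closed_walk n I [(0,0)]"
  by (auto simp: closed_walk_def path_edges_def cycle_verts_def)

lemma closed_walk_rep: "closed_walk n I c \<Longrightarrow> closed_walk n I (rep a c)"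
proof (induction a)
  case 0
  then show ?case by (auto simp: closed_walk_def path_edges_def cycle_verts_def)
qed (simp add: closed_walk_pcat)

lemma ccat_Nil [simp]: "ccat [] = [(0,0)]"
  by (simp add: ccat_def)

lemma ccat_Cons [simp]: "ccat (p # ps) = pcat p (ccat ps)"
  by (simp add: ccat_def)

lemma ccat_append: "ccat (ps @ qs) = foldr pcat ps (ccat qs)"
  by (simp add: ccat_def)

lemma closed_walk_ccat: "\<forall>p\<in>set ps. closed_walk n I p \<Longrightarrow> closed_walk n I (ccat ps)"
  by (induction ps) (simp_all add: closed_walk_pcat closed_walk_root)

lemma closed_walk_loop: "closed_walk n I loop"
  by (auto simp: closed_walk_def loop_def path_edges_def cycle_verts_def E_def)

lemma closed_walk_cycL:
  assumes "k \<in> I" "1 \<le> k" "k \<le> n"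
  shows "closed_walk n I (cycL (clen n) k)"
proof -
  have "path_edges (cycL (clen n) k) \<subseteq> E n" using assms by (auto simp: E_def)
  then show ?thesis using assms by (auto simp: closed_walk_def cycle_verts_def cycL_def)
qed

lemma rep_loop: "rep a loop = replicate (Suc a) (0,0)"
  by (induction a) (auto simp: loop_def pcat_def)

lemma rep_2: "c \<noteq> [] \<Longrightarrow> rep 2 c = c @ tl c"
  by (simp add: numeral_2_eq_2 pcat_def)

lemma tl_cycL: "tl (cycL L i) = map (\<lambda>j. (i,j)) [1..<L i] @ [(0,0)]"
  by (simp add: cycL_def)

lemma length_cycL: "1 \<le> L k \<Longrightarrow> length (cycL L k) = Suc (L k)"
  by (simp add: cycL_def)

lemma nth_cycL:
  "1 \<le> L k \<Longrightarrow> t \<le> L k \<Longrightarrow> cycL L k ! t = (if 0 < t \<and> t < L k then (k,t) else (0,0))"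
  by (cases t) (auto simp: cycL_def nth_append)

lemma foldr_pcat_eq_append_tl:
  assumes "ps \<noteq> []" "\<forall>p\<in>set ps. p \<noteq> [] \<and> last p = (0,0)"
  shows "\<exists>U. U \<noteq> [] \<and> last U = (0,0) \<and> foldr pcat ps R = U @ tl R"
  using assms
proof (induction ps)
  case (Cons p ps)
  show ?case
  proof (cases "ps = []")
    case True
    then show ?thesis using Cons.prems(2) by (intro exI[of _ p]) (simp add: pcat_def)
  next
    case False
    then obtain U where U: "U \<noteq> []" "last U = (0,0)" "foldr pcat ps R = U @ tl R"
      using Cons.IH Cons.prems(2) by auto
    have "foldr pcat (p # ps) R = (p @ tl U) @ tl R"
      using U(1,3) by (simp add: pcat_def)
    moreover have "last (p @ tl U) = (0,0)"
      using U Cons.prems by (cases "tl U = []") (auto simp: last_tl)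
    ultimately show ?thesis using Cons.prems(2) by auto
  qed
qed simp

section \<open>The paths P_{n,i}\<close>

abbreviation Pp :: "nat \<Rightarrow> nat \<Rightarrow> vert list" where
  "Pp n i \<equiv> Ppath n (clen n) i"

lemma Ppath_0: "Ppath 0 L (Suc 0) = rep 10 loop"
  by (simp add: Ppath_def)

lemma Ppath_1:
  "1 \<le> n \<Longrightarrow> Ppath n L 1 =
     ccat (map (\<lambda>a. pcat (rep a loop) (rep 2 (cycL L 1))) [1..<2*(1+(\<Sum>k\<in>{1..n}. L k))+1]
           @ [loop] @ map (\<lambda>k. rep 2 (cycL L k)) [2..<n+1] @ [loop])"
  by (simp add: Ppath_def Let_def)

lemma Ppath_middle:
  "2 \<le> i \<Longrightarrow> i \<le> n \<Longrightarrow>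
     Ppath n L i = ccat ([loop] @ map (\<lambda>k. rep 2 (cycL L k)) [i..<n+1] @ [loop])"
  by (simp add: Ppath_def Let_def)

lemma Ppath_Suc_last:
  "1 \<le> n \<Longrightarrow> Ppath n L (n+1) = rep ((n+2)^2 * (\<Sum>k\<in>{1..n}. L k)) loop"
  by (simp add: Ppath_def Let_def)

lemma Ppath_prefix:
  assumes "1 \<le> i" "i \<le> n"
  shows "\<exists>R. R \<noteq> [] \<and> Ppath n L i = [(0,0),(0,0)] @ map (\<lambda>j. (i,j)) [1..<L i] @ [(0,0)] @ R"
proof -
  obtain rest where "Ppath n L i =
      [(0,0),(0,0)] @ map (\<lambda>j. (i,j)) [1..<L i] @ [(0,0)] @ (tl (cycL L i) @ tl (ccat rest))"
  proof (cases "i = 1")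
    case True
    define kn where "kn = 2*(1+(\<Sum>k\<in>{1..n}. L k))"
    have "1 < kn + 1" by (simp add: kn_def)
    then have up: "[1..<kn+1] = 1 # [2..<kn+1]"
      by (simp add: upt_conv_Cons numeral_2_eq_2)
    have "Ppath n L i = ccat (pcat (rep 1 loop) (rep 2 (cycL L i)) #
        map (\<lambda>a. pcat (rep a loop) (rep 2 (cycL L 1))) [2..<kn+1]
        @ [loop] @ map (\<lambda>k. rep 2 (cycL L k)) [2..<n+1] @ [loop])"
      unfolding True Ppath_1[OF assms(2)[unfolded True]] kn_def[symmetric] up by simp
    then show ?thesis by (intro that) (simp add: rep_2 cycL_def pcat_def loop_def)
  next
    case False
    then have "[i..<n+1] = i # [Suc i..<n+1]" using assms by (simp add: upt_conv_Cons)
    then have "Ppath n L i = ccat (loop # rep 2 (cycL L i) #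
        map (\<lambda>k. rep 2 (cycL L k)) [Suc i..<n+1] @ [loop])"
      using assms False by (simp add: Ppath_middle)
    then show ?thesis by (intro that) (simp add: rep_2 cycL_def pcat_def loop_def)
  qed
  then show ?thesis by (auto simp: tl_cycL)
qed

lemma clen_lower_bound: "1 \<le> i \<Longrightarrow> i \<le> n \<Longrightarrow> n + 2 \<le> clen n i + i"
proof (induction n arbitrary: i)
  case (Suc n)
  show ?case
  proof (cases "i \<le> n")
    case True
    obtain R where R: "R \<noteq> []"
      "Pp n i = [(0,0),(0,0)] @ map (\<lambda>j. (i,j)) [1..<clen n i] @ [(0,0)] @ R"
      using Ppath_prefix[OF Suc.prems(1) True] by blast
    have "clen (Suc n) i = 2 + (clen n i - 1) + length R"
      using R(2) by simp
    then show ?thesis using Suc.IH[OF Suc.prems(1) True] R(1) by (cases R) auto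
  next
    case False
    then have i: "i = Suc n" using Suc.prems by simp
    show ?thesis
    proof (cases "n = 0")
      case True
      then show ?thesis using i by (simp add: Ppath_0 rep_loop)
    next
      case False
      then have n1: "1 \<le> n" by simp
      have "1 \<le> clen n 1" using Suc.IH[of 1] n1 by simp
      also have "clen n 1 \<le> (\<Sum>k\<in>{1..n}. clen n k)"
        using n1 by (intro member_le_sum) auto
      finally have "4 * 1 \<le> (n+2)^2 * (\<Sum>k\<in>{1..n}. clen n k)"
        by (intro mult_le_mono) (auto simp: power2_eq_square)
      moreover have "clen (Suc n) i = (n+2)^2 * (\<Sum>k\<in>{1..n}. clen n k)"
        using i Ppath_Suc_last[OF n1, of "clen n"] by (simp add: rep_loop)
      ultimately show ?thesis using i by simp
    qed
  qed
qed simp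

lemma clen_ge_2: "1 \<le> i \<Longrightarrow> i \<le> n \<Longrightarrow> 2 \<le> clen n i"
  using clen_lower_bound[of i n] by simp

lemma closed_walk_Ppath:
  assumes "1 \<le> i" "i \<le> Suc n"
  shows "closed_walk n {i..n} (Pp n i)"
proof -
  consider "n = 0" | "1 \<le> n" "i = 1" | "2 \<le> i" "i \<le> n" | "1 \<le> n" "i = n + 1"
    using assms by linarith
  then show ?thesis
  proof cases
    case 1
    then show ?thesis using assms by (simp add: Ppath_0 closed_walk_rep closed_walk_loop)
  next
    case 2
    have "closed_walk n {1..n} (cycL (clen n) 1)" using 2 by (intro closed_walk_cycL) auto
    then show ?thesis unfolding 2(2) Ppath_1[OF 2(1)]
      by (intro closed_walk_ccat)
        (auto intro!: closed_walk_pcat closed_walk_rep closed_walk_loop closed_walk_cycL)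
  next
    case 3
    then show ?thesis unfolding Ppath_middle[OF 3]
      by (intro closed_walk_ccat) (auto intro!: closed_walk_rep closed_walk_loop closed_walk_cycL)
  next
    case 4
    then show ?thesis unfolding 4(2) Ppath_Suc_last[OF 4(1)]
      by (simp add: closed_walk_rep closed_walk_loop)
  qed
qed

lemma Ppath_nth_in_cycle_verts:
  "1 \<le> i \<Longrightarrow> i \<le> Suc n \<Longrightarrow> j < length (Pp n i) \<Longrightarrow> Pp n i ! j \<in> cycle_verts n {i..n}"
  using closed_walk_Ppath[of i n] nth_mem[of j "Pp n i"] by (auto simp: closed_walk_def)

lemma Ppath_nth_last: "1 \<le> i \<Longrightarrow> i \<le> Suc n \<Longrightarrow> Pp n i ! (length (Pp n i) - 1) = (0,0)"
  using closed_walk_Ppath[of i n] by (auto simp: closed_walk_def last_conv_nth)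

lemma Ppath_edge:
  "1 \<le> i \<Longrightarrow> i \<le> Suc n \<Longrightarrow> Suc j < length (Pp n i) \<Longrightarrow> (Pp n i ! j, Pp n i ! Suc j) \<in> E n"
  using closed_walk_Ppath[of i n] path_edges_nth[of j "Pp n i"] by (auto simp: closed_walk_def)

lemma ccat_snoc_loop_nth_penultimate:
  assumes "ps \<noteq> []" "\<forall>p\<in>set ps. closed_walk n I p"
  shows "ccat (ps @ [loop]) ! (length (ccat (ps @ [loop])) - 2) = (0,0)"
proof -
  obtain U where U: "U \<noteq> []" "last U = (0,0)" "foldr pcat ps loop = U @ tl loop"
    using foldr_pcat_eq_append_tl[OF assms(1)] assms(2) by (auto simp: closed_walk_def)
  have "ccat (ps @ [loop]) = U @ [(0,0)]"
    using U(3) by (simp add: ccat_append pcat_def loop_def)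
  then show ?thesis using U(1,2) by (simp add: last_conv_nth nth_append)
qed

lemma Ppath_nth_penultimate:
  assumes "1 \<le> i" "i \<le> Suc n" "2 \<le> length (Pp n i)"
  shows "Pp n i ! (length (Pp n i) - 2) = (0,0)"
proof -
  consider "i = Suc n" | "1 \<le> n" "i = 1" | "2 \<le> i" "i \<le> n" using assms by linarith
  then show ?thesis
  proof cases
    case 1
    have "Pp n i ! (length (Pp n i) - 2) \<in> cycle_verts n {i..n}"
      using assms by (intro Ppath_nth_in_cycle_verts) auto
    then show ?thesis using 1 by (simp add: cycle_verts_def)
  next
    case 2
    have "closed_walk n {1..n} (cycL (clen n) 1)" using 2 by (intro closed_walk_cycL) auto
    then show ?thesis unfolding 2(2) Ppath_1[OF 2(1)] append_assoc[symmetric]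
      by (intro ccat_snoc_loop_nth_penultimate[where I="{1..n}"])
        (auto intro!: closed_walk_pcat closed_walk_rep closed_walk_loop closed_walk_cycL)
  next
    case 3
    then show ?thesis unfolding Ppath_middle[OF 3] append_assoc[symmetric]
      by (intro ccat_snoc_loop_nth_penultimate[where I="{i..n}"])
        (auto intro!: closed_walk_rep closed_walk_loop closed_walk_cycL)
  qed
qed

lemma Ppath_nth_1:
  assumes "1 \<le> i" "i \<le> Suc n" "2 \<le> length (Pp n i)"
  shows "Pp n i ! 1 = (0,0)"
proof (cases "i = Suc n")
  case True
  have "Pp n i ! 1 \<in> cycle_verts n {i..n}" using assms by (intro Ppath_nth_in_cycle_verts) auto
  then show ?thesis using True by (simp add: cycle_verts_def)
next
  case False
  then show ?thesis using Ppath_prefix[of i n "clen n"] assms by auto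
qed

lemma Ppath_nth_Suc:
  assumes "1 \<le> i" "i \<le> n" "1 \<le> t" "t < clen n i"
  shows "Pp n i ! Suc t = (i,t)"
  using Ppath_prefix[of i n "clen n"] assms by (auto simp: nth_append)

section \<open>Edges and the bonding maps\<close>

definition cycle_next :: "nat \<Rightarrow> vert \<Rightarrow> vert" where
  "cycle_next n v =
     (if v = (0,0) then (0,0)
      else if Suc (snd v) < clen n (fst v) then (fst v, Suc (snd v)) else (0,0))"

lemma V_nonroot:
  "v \<in> V n \<Longrightarrow> v \<noteq> (0,0) \<Longrightarrow> 1 \<le> fst v \<and> fst v \<le> n \<and> 1 \<le> snd v \<and> snd v < clen n (fst v)"
  by (auto simp: V_def)

lemma cycle_next_in_V: "v \<in> V n \<Longrightarrow> cycle_next n v \<in> V n"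
  by (auto simp: cycle_next_def V_def)

lemma E_cases:
  assumes "(u,w) \<in> E n"
  obtains "u = (0,0)" "w = (0,0)"
  | k t where "1 \<le> k" "k \<le> n" "t < clen n k"
      "u = (if 0 < t \<and> t < clen n k then (k,t) else (0,0))"
      "w = (if Suc t < clen n k then (k,Suc t) else (0,0))"
proof (cases "(u,w) = ((0,0),(0,0))")
  case False
  then obtain k where k: "k \<in> {1..n}" "(u,w) \<in> path_edges (cycL (clen n) k)"
    using assms by (auto simp: E_def)
  have L: "1 \<le> clen n k" using clen_ge_2[of k n] k by auto
  obtain t where t: "Suc t < length (cycL (clen n) k)"
    "u = cycL (clen n) k ! t" "w = cycL (clen n) k ! Suc t"
    using k(2) unfolding path_edges_conv_nth by auto
  then show thesis using that(2)[of k t] k(1) L by (auto simp: length_cycL nth_cycL)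
qed simp

lemma E_from_nonroot: "v \<noteq> (0,0) \<Longrightarrow> (v,w) \<in> E n \<Longrightarrow> w = cycle_next n v"
  by (erule E_cases) (auto simp: cycle_next_def split: if_splits)

lemma E_from_root: "((0,0),w) \<in> E n \<Longrightarrow> w = (0,0) \<or> (\<exists>k. w = (k,1))"
  by (erule E_cases) (auto split: if_splits)

lemma edge_cycle_next:
  assumes "v \<in> V n" "v \<noteq> (0,0)"
  shows "(v, cycle_next n v) \<in> E n"
proof -
  obtain k t where v: "v = (k,t)" "1 \<le> k" "k \<le> n" "1 \<le> t" "t < clen n k"
    using assms by (auto simp: V_def)
  have "(cycL (clen n) k ! t, cycL (clen n) k ! Suc t) \<in> path_edges (cycL (clen n) k)"
    using v by (intro path_edges_nth) (simp add: length_cycL)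
  then have "(cycL (clen n) k ! t, cycL (clen n) k ! Suc t) \<in> E n"
    using v by (auto simp: E_def)
  then show ?thesis using v by (auto simp: nth_cycL cycle_next_def split: if_splits)
qed

lemma V_Suc_nonroot_length_Ppath:
  "v \<in> V (Suc n) \<Longrightarrow> v \<noteq> (0,0) \<Longrightarrow> Suc (snd v) < length (Pp n (fst v))"
  using V_nonroot[of v "Suc n"] by auto

lemma phi_nonroot_in_cycle_verts:
  assumes "v \<in> V (Suc n)" "v \<noteq> (0,0)"
  shows "phi n v \<in> cycle_verts n {fst v..n}"
  using assms V_nonroot[OF assms] V_Suc_nonroot_length_Ppath[OF assms]
  by (auto simp: phi_def intro!: Ppath_nth_in_cycle_verts)

lemma phi_in_V: "v \<in> V (Suc n) \<Longrightarrow> phi n v \<in> V n"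
  using phi_nonroot_in_cycle_verts[of v n]
  by (cases "v = (0,0)") (auto simp: phi_def V_def cycle_verts_def)

lemma phi_fst_le:
  assumes "v \<in> V (Suc n)" "phi n v \<noteq> (0,0)"
  shows "v \<noteq> (0,0) \<and> fst v \<le> fst (phi n v)"
proof -
  have "v \<noteq> (0,0)" using assms(2) by (auto simp: phi_def)
  then show ?thesis
    using assms phi_nonroot_in_cycle_verts[OF assms(1)] by (auto simp: cycle_verts_def)
qed

lemma phi_edge:
  assumes "a \<in> V (Suc n)" "b \<in> V (Suc n)" "(a,b) \<in> E (Suc n)"
  shows "(phi n a, phi n b) \<in> E n"
proof (cases "a = (0,0)")
  case True
  show ?thesis
  proof (cases "b = (0,0)")
    case True
    then show ?thesis using \<open>a = (0,0)\<close> by (simp add: phi_def E_def)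
  next
    case False
    then obtain k where b: "b = (k,1)" using E_from_root assms True by blast
    have k: "1 \<le> k" "k \<le> Suc n" "Suc 1 < length (Pp n k)"
      using V_nonroot[OF assms(2) False] V_Suc_nonroot_length_Ppath[OF assms(2) False] b by auto
    have "(Pp n k ! 0, Pp n k ! Suc 0) \<in> E n" using k by (intro Ppath_edge) auto
    moreover have "Pp n k ! 0 = (0,0)"
      using closed_walk_Ppath[of k n] k by (auto simp: closed_walk_def hd_conv_nth)
    ultimately show ?thesis using True b by (simp add: phi_def)
  qed
next
  case False
  obtain i j where a: "a = (i,j)" by (cases a)
  have ij: "1 \<le> i" "i \<le> Suc n" "1 \<le> j" "j < clen (Suc n) i"
    using V_nonroot[OF assms(1) False] a by auto
  have "phi n b = Pp n i ! Suc j"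
  proof (cases "Suc j < clen (Suc n) i")
    case False
    then have "Suc j = length (Pp n i) - 1" using ij by simp
    then show ?thesis
      using E_from_nonroot[OF \<open>a \<noteq> (0,0)\<close> assms(3)] a False Ppath_nth_last[OF ij(1,2)]
      by (simp add: cycle_next_def phi_def)
  qed (use E_from_nonroot[OF \<open>a \<noteq> (0,0)\<close> assms(3)] a ij in \<open>simp add: cycle_next_def phi_def\<close>)
  moreover have "(Pp n i ! j, Pp n i ! Suc j) \<in> E n" using ij by (intro Ppath_edge) auto
  ultimately show ?thesis using a ij by (simp add: phi_def)
qed

fun proj :: "nat \<Rightarrow> nat \<Rightarrow> vert \<Rightarrow> vert" where
  "proj n 0 v = v"
| "proj n (Suc k) v = phi n (proj (Suc n) k v)"

lemma proj_edge:
  "a \<in> V (n+k) \<Longrightarrow> b \<in> V (n+k) \<Longrightarrow> (a,b) \<in> E (n+k) \<Longrightarrow>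
     proj n k a \<in> V n \<and> proj n k b \<in> V n \<and> (proj n k a, proj n k b) \<in> E n"
proof (induction k arbitrary: n)
  case (Suc k)
  then have "proj (Suc n) k a \<in> V (Suc n) \<and> proj (Suc n) k b \<in> V (Suc n) \<and>
      (proj (Suc n) k a, proj (Suc n) k b) \<in> E (Suc n)"
    using Suc.IH[of "Suc n"] by simp
  then show ?case using phi_in_V phi_edge by simp
qed simp

section \<open>The homeomorphism T\<close>

lemma X_in_V: "x \<in> X \<Longrightarrow> x n \<in> V n"
  by (simp add: X_def)

lemma X_phi: "x \<in> X \<Longrightarrow> phi n (x (Suc n)) = x n"
  by (simp add: X_def)

lemma X_proj: "x \<in> X \<Longrightarrow> x n = proj n k (x (n+k))"
proof (induction k arbitrary: n)
  case (Suc k)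
  have "proj n (Suc k) (x (n + Suc k)) = phi n (proj (Suc n) k (x (Suc n + k)))" by simp
  also have "\<dots> = phi n (x (Suc n))" using Suc.IH[of "Suc n"] Suc.prems by simp
  also have "\<dots> = x n" using Suc.prems by (rule X_phi)
  finally show ?case by simp
qed simp

lemma X_nonroot_Suc: "x \<in> X \<Longrightarrow> x n \<noteq> (0,0) \<Longrightarrow> x (Suc n) \<noteq> (0,0)"
  using X_phi[of x n] by (auto simp: phi_def)

lemma X_nonroot_mono:
  assumes "x \<in> X" "x m \<noteq> (0,0)" "m \<le> n"
  shows "x n \<noteq> (0,0)"
  using assms(3)
proof (induction n rule: dec_induct)
  case (step k)
  then show ?case using X_nonroot_Suc[OF assms(1)] by blast
qed (use assms in simp)

lemma phi_cycle_next:
  assumes x: "x \<in> X" "x n \<noteq> (0,0)"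
  shows "phi n (cycle_next (Suc n) (x (Suc n))) = cycle_next n (x n)"
proof -
  have "x (Suc n) \<noteq> (0,0)" using X_nonroot_Suc x by blast
  then have "(x (Suc n), cycle_next (Suc n) (x (Suc n))) \<in> E (Suc n)"
    using edge_cycle_next[OF X_in_V[OF x(1)]] by blast
  then have "(phi n (x (Suc n)), phi n (cycle_next (Suc n) (x (Suc n)))) \<in> E n"
    using phi_edge X_in_V[OF x(1)] cycle_next_in_V[OF X_in_V[OF x(1)]] by blast
  then show ?thesis using E_from_nonroot[OF x(2)] X_phi[OF x(1)] by simp
qed

text \<open>
  Once a coordinate \<open>x m\<close> leaves the root, \<open>T\<close> moves all higher coordinates along their
  cycles and the lower coordinates are the projections of the new coordinate \<open>m\<close>.
\<close>

lemma successor_exists: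
  assumes x: "x \<in> X"
  shows "\<exists>y\<in>X. \<forall>n. (x n, y n) \<in> E n"
proof (cases "\<exists>m. x m \<noteq> (0,0)")
  case False
  then show ?thesis using x by (intro bexI[of _ x]) (auto simp: E_def)
next
  case True
  then obtain m where m: "x m \<noteq> (0,0)" by blast
  define w where "w = cycle_next m (x m)"
  define y where "y n = (if m \<le> n then cycle_next n (x n) else proj n (m-n) w)" for n
  have w: "x m \<in> V m" "w \<in> V m" "(x m, w) \<in> E m"
    unfolding w_def using edge_cycle_next X_in_V[OF x] m cycle_next_in_V by auto
  have low: "y n \<in> V n \<and> (x n, y n) \<in> E n" if "n < m" for n
  proof -
    have "n + (m-n) = m" using that by simp
    then show ?thesis
      using proj_edge[of "x m" n "m-n" w] w X_proj[OF x, of n "m-n"] that by (simp add: y_def)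
  qed
  have "y n \<in> V n" for n
    using low[of n] cycle_next_in_V[OF X_in_V[OF x]] by (cases "m \<le> n") (auto simp: y_def)
  moreover have "phi n (y (Suc n)) = y n" for n
  proof (cases "m \<le> n")
    case True
    then show ?thesis using phi_cycle_next[OF x X_nonroot_mono[OF x m True]] by (simp add: y_def)
  next
    case False
    then have "y (Suc n) = proj (Suc n) (m - Suc n) w"
      by (cases "m = Suc n") (auto simp: y_def w_def)
    moreover have "m - n = Suc (m - Suc n)" using False by simp
    ultimately show ?thesis using False by (simp add: y_def)
  qed
  ultimately have "y \<in> X" by (simp add: X_def)
  moreover have "(x n, y n) \<in> E n" for n
  proof (cases "m \<le> n")
    case True
    then show ?thesis
      using edge_cycle_next[OF X_in_V[OF x] X_nonroot_mono[OF x m True]] by (simp add: y_def)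
  qed (use low in simp)
  ultimately show ?thesis by blast
qed

lemma successor_of_root:
  assumes y: "y \<in> X" "\<forall>n. ((0,0), y n) \<in> E n"
  shows "y n = (0,0)"
proof -
  have "phi n (y (Suc n)) = (0,0)"
  proof (cases "y (Suc n) = (0,0)")
    case False
    then obtain k where k: "y (Suc n) = (k,1)" using E_from_root y(2) by blast
    have "1 \<le> k" "k \<le> Suc n" "Suc 1 < length (Pp n k)"
      using V_nonroot[OF X_in_V[OF y(1)] False] V_Suc_nonroot_length_Ppath[OF X_in_V[OF y(1)] False] k
      by auto
    then show ?thesis using k Ppath_nth_1[of k n] by (simp add: phi_def)
  qed (simp add: phi_def)
  then show ?thesis using X_phi[OF y(1)] by simp
qed

lemma successor_unique:
  assumes x: "x \<in> X"
    and y: "y \<in> X" "\<forall>n. (x n, y n) \<in> E n"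
    and z: "z \<in> X" "\<forall>n. (x n, z n) \<in> E n"
  shows "y = z"
proof (cases "\<exists>m. x m \<noteq> (0,0)")
  case False
  then show ?thesis using successor_of_root[OF y(1)] successor_of_root[OF z(1)] y(2) z(2) by auto
next
  case True
  then obtain m where m: "x m \<noteq> (0,0)" by blast
  have high: "y n = z n" if "m \<le> n" for n
    using E_from_nonroot[OF X_nonroot_mono[OF x m that], of "y n" n]
      E_from_nonroot[OF X_nonroot_mono[OF x m that], of "z n" n] y(2) z(2) by simp
  show ?thesis
  proof
    fix n
    show "y n = z n"
    proof (cases "m \<le> n")
      case False
      then have "n + (m-n) = m" by simp
      then show ?thesis using X_proj[OF y(1), of n "m-n"] X_proj[OF z(1), of n "m-n"] high[of m]
        by simp
    qed (rule high)
  qed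
qed

lemma T_in_X_edge: "x \<in> X \<Longrightarrow> T x \<in> X \<and> (\<forall>n. (x n, T x n) \<in> E n)"
proof -
  assume "x \<in> X"
  then have "\<exists>!y. y \<in> X \<and> (\<forall>n. (x n, y n) \<in> E n)"
    using successor_exists successor_unique by blast
  then show ?thesis unfolding T_def by (rule theI')
qed

lemma T_nonroot: "x \<in> X \<Longrightarrow> x n \<noteq> (0,0) \<Longrightarrow> T x n = cycle_next n (x n)"
  using T_in_X_edge E_from_nonroot by blast

lemma funpow_T_in_X: "x \<in> X \<Longrightarrow> (T ^^ k) x \<in> X"
  by (induction k) (auto simp: T_in_X_edge)

lemma funpow_T_p_pt: "(T ^^ k) p_pt = p_pt"
proof -
  have p: "p_pt \<in> X" by (simp add: X_def p_pt_def V_def phi_def)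
  moreover have "\<forall>n. (p_pt n, p_pt n) \<in> E n" by (simp add: p_pt_def E_def)
  ultimately have "p_pt = T p_pt"
    by (intro successor_unique[of p_pt]) (use T_in_X_edge[OF p] in auto)
  then show ?thesis by (induction k) simp_all
qed

section \<open>The eventual cycle index\<close>

lemma X_fst_antimono:
  assumes x: "x \<in> X" and "x m \<noteq> (0,0)" "m \<le> n"
  shows "fst (x n) \<le> fst (x m)"
  using assms(3)
proof (induction n rule: dec_induct)
  case (step k)
  have "fst (x (Suc k)) \<le> fst (x k)"
    using phi_fst_le[OF X_in_V[OF x, of "Suc k"]] X_phi[OF x, of k]
      X_nonroot_mono[OF x assms(2) step(1)] by simp
  then show ?case using step.IH by simp
qed simp

definition eventual_cycle :: "(nat \<Rightarrow> vert) \<Rightarrow> nat \<Rightarrow> bool" where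
  "eventual_cycle x d \<longleftrightarrow> (\<forall>\<^sub>F n in sequentially. x n \<noteq> (0,0) \<and> fst (x n) = d)"

lemma eventual_cycle_exists:
  assumes x: "x \<in> X" and "x \<noteq> p_pt"
  shows "\<exists>d. eventual_cycle x d"
proof -
  obtain m where m: "x m \<noteq> (0,0)" using assms(2) by (auto simp: p_pt_def)
  define d where "d = (LEAST d. \<exists>k. fst (x (m+k)) = d)"
  have "\<exists>k. fst (x (m+k)) = d" unfolding d_def by (rule LeastI_ex) blast
  then obtain k0 where k0: "fst (x (m+k0)) = d" by blast
  have "x n \<noteq> (0,0) \<and> fst (x n) = d" if n: "m + k0 \<le> n" for n
  proof
    show "x n \<noteq> (0,0)" using X_nonroot_mono[OF x m] n by simp
    have "fst (x n) \<le> d"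
      using X_fst_antimono[OF x X_nonroot_mono[OF x m, of "m+k0"] n] k0 by simp
    moreover have "d \<le> fst (x (m + (n - m)))" unfolding d_def by (rule Least_le) blast
    ultimately show "fst (x n) = d" using n by simp
  qed
  then show ?thesis unfolding eventual_cycle_def eventually_sequentially by blast
qed

lemma deg_eq_eventual_cycle:
  assumes x: "x \<in> X" and "eventual_cycle x d"
  shows "deg x = enat d"
proof -
  obtain N where N: "\<forall>n\<ge>N. x n \<noteq> (0,0) \<and> fst (x n) = d"
    using assms(2) by (auto simp: eventual_cycle_def eventually_sequentially)
  have "deg x \<le> degv (x N)" unfolding deg_def by (rule INF_lower) simp
  also have "\<dots> = enat d" using N by (simp add: degv_def)
  finally show ?thesis
  proof (rule antisym)
    show "enat d \<le> deg x" unfolding deg_def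
    proof (rule INF_greatest)
      fix n
      show "enat d \<le> degv (x n)"
      proof (cases "x n = (0,0)")
        case False
        then have "fst (x (max n N)) \<le> fst (x n)" using X_fst_antimono[OF x] by simp
        then show ?thesis using N False by (simp add: degv_def)
      qed (simp add: degv_def)
    qed
  qed
qed

lemma eventual_cycle_root_below:
  assumes x: "x \<in> X" and "eventual_cycle x e" "n < e"
  shows "x n = (0,0)"
proof (rule ccontr)
  assume nz: "x n \<noteq> (0,0)"
  obtain N where "\<forall>n\<ge>N. x n \<noteq> (0,0) \<and> fst (x n) = e"
    using assms(2) by (auto simp: eventual_cycle_def eventually_sequentially)
  then have "e \<le> fst (x n)" using X_fst_antimono[OF x nz, of "max n N"] by simp
  moreover have "fst (x n) \<le> n" using V_nonroot[OF X_in_V[OF x] nz] by simp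
  ultimately show False using assms(3) by simp
qed

lemma eventual_cycle_T:
  assumes x: "x \<in> X" and "eventual_cycle x d"
  shows "eventual_cycle (T x) d"
proof -
  obtain N where N: "\<forall>n\<ge>N. x n \<noteq> (0,0) \<and> fst (x n) = d"
    using assms(2) by (auto simp: eventual_cycle_def eventually_sequentially)
  have "T x (Suc n) \<noteq> (0,0) \<and> fst (T x (Suc n)) = d" if n: "N \<le> n" for n
  proof -
    have nz: "x (Suc n) \<noteq> (0,0)" "x n \<noteq> (0,0)" "fst (x (Suc n)) = d" using N n by auto
    obtain j where j: "x (Suc n) = (d,j)" using nz(3) by (cases "x (Suc n)") auto
    have dj: "1 \<le> d" "d \<le> Suc n" "Suc j < length (Pp n d)"
      using V_nonroot[OF X_in_V[OF x] nz(1)] V_Suc_nonroot_length_Ppath[OF X_in_V[OF x] nz(1)] j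
      by auto
    have "Suc j < clen (Suc n) d"
    proof (rule ccontr)
      assume "\<not> Suc j < clen (Suc n) d"
      then have "j = length (Pp n d) - 2" using dj by simp
      then have "Pp n d ! j = (0,0)" using dj Ppath_nth_penultimate[of d n] by simp
      moreover have "x n = Pp n d ! j" using X_phi[OF x, of n] j dj by (simp add: phi_def)
      ultimately show False using nz(2) by simp
    qed
    then show ?thesis using T_nonroot[OF x nz(1)] j dj by (simp add: cycle_next_def)
  qed
  then show ?thesis unfolding eventual_cycle_def eventually_sequentially
    by (metis Suc_le_D Suc_le_mono)
qed

lemma eventual_cycle_funpow_T:
  "x \<in> X \<Longrightarrow> eventual_cycle x d \<Longrightarrow> eventual_cycle ((T ^^ k) x) d"
  by (induction k) (auto intro: eventual_cycle_T funpow_T_in_X)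

section \<open>Orbits reach the next cycle\<close>

lemma ccat_split_before_cycle:
  assumes ps: "ps \<noteq> []" "\<forall>p\<in>set ps. closed_walk n I p"
    and rest: "\<forall>q\<in>set rest. closed_walk n {Suc d..n} q"
    and d: "1 \<le> d" "Suc d \<le> n" and t: "1 \<le> t" "t < clen n (Suc d)"
  shows "\<exists>U W. ccat (ps @ rep 2 (cycL (clen n) (Suc d)) # rest) = U @ W \<and>
           (\<forall>v\<in>set W. fst v \<noteq> d) \<and> (Suc d, t) \<in> set W"
proof -
  let ?c = "cycL (clen n) (Suc d)"
  let ?W = "ccat (rep 2 ?c # rest)"
  obtain U where U: "foldr pcat ps ?W = U @ tl ?W"
    using foldr_pcat_eq_append_tl[OF ps(1)] ps(2) by (auto simp: closed_walk_def)
  have "closed_walk n {Suc d..n} ?c" using d by (intro closed_walk_cycL) auto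
  then have "closed_walk n {Suc d..n} ?W" using rest by (intro closed_walk_ccat) (auto intro: closed_walk_rep)
  then have "\<forall>v\<in>set (tl ?W). fst v \<noteq> d"
    using d(1) by (auto simp: closed_walk_def cycle_verts_def dest!: list.set_sel(2))
  moreover have "tl ?W = tl ?c @ tl ?c @ tl (ccat rest)"
    by (simp add: rep_2 cycL_def pcat_def)
  then have "(Suc d, t) \<in> set (tl ?W)" using t by (simp add: tl_cycL)
  ultimately show ?thesis using U by (auto simp: ccat_append)
qed

lemma Ppath_split_before_next_cycle:
  assumes d: "1 \<le> d" "Suc d \<le> n" and t: "1 \<le> t" "t < clen n (Suc d)"
  shows "\<exists>U W. Pp n d = U @ W \<and> (\<forall>v\<in>set W. fst v \<noteq> d) \<and> (Suc d, t) \<in> set W"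
proof (cases "d = 1")
  case True
  have n1: "1 \<le> n" using d by simp
  have up: "[2..<n+1] = 2 # [3..<n+1]" using d True by (simp add: upt_conv_Cons)
  define ps where "ps = map (\<lambda>a. pcat (rep a loop) (rep 2 (cycL (clen n) 1)))
      [1..<2*(1+(\<Sum>k\<in>{1..n}. clen n k))+1] @ [loop]"
  define rest where "rest = map (\<lambda>k. rep 2 (cycL (clen n) k)) [3..<n+1] @ [loop]"
  have "Pp n d = ccat (ps @ rep 2 (cycL (clen n) (Suc 1)) # rest)"
    unfolding True Ppath_1[OF n1] ps_def rest_def up by (simp add: numeral_2_eq_2)
  moreover have "closed_walk n {1..n} (cycL (clen n) 1)" using n1 by (intro closed_walk_cycL) auto
  then have "\<exists>U W. ccat (ps @ rep 2 (cycL (clen n) (Suc 1)) # rest) = U @ W \<and>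
      (\<forall>v\<in>set W. fst v \<noteq> 1) \<and> (Suc 1, t) \<in> set W"
    using d t True
    by (intro ccat_split_before_cycle[where I="{1..n}"])
      (auto simp: ps_def rest_def intro!: closed_walk_pcat closed_walk_rep closed_walk_loop
        closed_walk_cycL)
  ultimately show ?thesis using True by simp
next
  case False
  then have d2: "2 \<le> d" "d \<le> n" using d by simp_all
  have up: "[d..<n+1] = d # Suc d # [Suc (Suc d)..<n+1]" using d by (simp add: upt_conv_Cons)
  define ps where "ps = [loop, rep 2 (cycL (clen n) d)]"
  define rest where "rest = map (\<lambda>k. rep 2 (cycL (clen n) k)) [Suc (Suc d)..<n+1] @ [loop]"
  have "Pp n d = ccat (ps @ rep 2 (cycL (clen n) (Suc d)) # rest)"
    unfolding Ppath_middle[OF d2] ps_def rest_def up using d by simp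
  moreover have "\<exists>U W. ccat (ps @ rep 2 (cycL (clen n) (Suc d)) # rest) = U @ W \<and>
      (\<forall>v\<in>set W. fst v \<noteq> d) \<and> (Suc d, t) \<in> set W"
    using d t
    by (intro ccat_split_before_cycle[where I="{d..n}"])
      (auto simp: ps_def rest_def intro!: closed_walk_rep closed_walk_loop closed_walk_cycL)
  ultimately show ?thesis by simp
qed

lemma funpow_T_along_cycle:
  assumes x: "x \<in> X" and "x m = (i,j)" "1 \<le> i" "j + k < clen m i"
  shows "(T ^^ k) x m = (i, j+k)"
  using assms(4)
proof (induction k)
  case (Suc k)
  then have "(T ^^ k) x m = (i, j+k)" by simp
  then show ?case
    using T_nonroot[OF funpow_T_in_X[OF x], of k m] Suc.prems assms(3) by (simp add: cycle_next_def)
qed (use assms in simp)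

lemma funpow_T_traces_Ppath:
  assumes x: "x \<in> X" and "x (Suc n) = (d,j)" "1 \<le> d" "j \<le> j'" "j' < clen (Suc n) d"
  shows "(T ^^ (j' - j)) x n = Pp n d ! j'"
proof -
  have "(T ^^ (j' - j)) x (Suc n) = (d, j')"
    using funpow_T_along_cycle[OF x assms(2,3), of "j' - j"] assms(4,5) by simp
  then show ?thesis using X_phi[OF funpow_T_in_X[OF x, of "j' - j"], of n] assms(3) by (simp add: phi_def)
qed

lemma X_descend_on_cycle:
  assumes z: "z \<in> X" and "z (Suc d + s) = (Suc d, Suc s)"
  shows "z (Suc d) = (Suc d, 1)"
  using assms(2)
proof (induction s)
  case (Suc s)
  let ?m = "Suc d + s"
  have "z ?m = phi ?m (z (Suc ?m))" using X_phi[OF z] by simp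
  also have "\<dots> = Pp ?m (Suc d) ! Suc (Suc s)" using Suc.prems by (simp add: phi_def)
  also have "\<dots> = (Suc d, Suc s)"
    using clen_lower_bound[of "Suc d" ?m] by (intro Ppath_nth_Suc) auto
  finally show ?case using Suc.IH by simp
qed simp

lemma eventual_cycle_orbit_leaves_root:
  assumes x: "x \<in> X" and "eventual_cycle x d"
  shows "\<exists>k. (T ^^ k) x (Suc d) \<noteq> (0,0)"
proof -
  obtain N where N: "\<forall>n\<ge>N. x n \<noteq> (0,0) \<and> fst (x n) = d"
    using assms(2) by (auto simp: eventual_cycle_def eventually_sequentially)
  \<comment> \<open>\<open>x n\<close> lies on c_{n,d}, and the vertex \<open>(d + 1, n - d)\<close> of c_{n,d+1}
    projects to \<open>(d + 1, 1)\<close>\<close>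
  define n where "n = N + d + 1"
  have nz: "x (Suc n) \<noteq> (0,0)" "fst (x (Suc n)) = d" "fst (x n) = d"
    using N by (auto simp: n_def)
  obtain j where j: "x (Suc n) = (d,j)" using nz(2) by (cases "x (Suc n)") auto
  have d1: "1 \<le> d" using N V_nonroot[OF X_in_V[OF x], of N] by auto
  have jl: "Suc j < length (Pp n d)" using V_Suc_nonroot_length_Ppath[OF X_in_V[OF x] nz(1)] j by simp
  have xn: "x n = Pp n d ! j" using X_phi[OF x, of n] j d1 by (simp add: phi_def)
  define t where "t = n - d"
  have t: "1 \<le> t" "t < clen n (Suc d)" "n = Suc d + (t - 1)" "t = Suc (t - 1)"
    using clen_lower_bound[of "Suc d" n] unfolding t_def n_def by auto
  obtain U W where UW: "Pp n d = U @ W" "\<forall>v\<in>set W. fst v \<noteq> d" "(Suc d, t) \<in> set W"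
    using Ppath_split_before_next_cycle[OF d1 _ t(1,2)] n_def by auto
  have jU: "j < length U"
  proof (rule ccontr)
    assume "\<not> j < length U"
    then have "x n \<in> set W" using UW(1) jl xn by (auto simp: nth_append)
    then show False using UW(2) nz(3) by blast
  qed
  obtain q where q: "q < length W" "W ! q = (Suc d, t)" using UW(3) by (metis in_set_conv_nth)
  define j' where "j' = length U + q"
  have pj: "Pp n d ! j' = (Suc d, t)" using q UW(1) by (simp add: j'_def nth_append)
  have "j' < length (Pp n d)" using q UW(1) by (simp add: j'_def)
  moreover have "j' \<noteq> length (Pp n d) - 1" using pj Ppath_nth_last[of d n] d1 n_def by auto
  ultimately have j'l: "j' < clen (Suc n) d" by simp
  define z where "z = (T ^^ (j' - j)) x"
  have "z n = (Suc d, t)"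
    unfolding z_def using funpow_T_traces_Ppath[OF x j d1 _ j'l] jU pj by (simp add: j'_def)
  then have "z (Suc d) = (Suc d, 1)"
    using X_descend_on_cycle[OF funpow_T_in_X[OF x, of "j' - j"], of d "t - 1"] t by (simp add: z_def)
  then show ?thesis unfolding z_def by (intro exI[of _ "j' - j"]) simp
qed

section \<open>Asymptotic pairs\<close>

lemma dist_X_commute: "dist_X a b = dist_X b a"
proof -
  have "(LEAST i. a i \<noteq> b i) = (LEAST i. b i \<noteq> a i)" by metis
  then show ?thesis by (auto simp: dist_X_def)
qed

lemma asymptotic_sym: "asymptotic x y \<Longrightarrow> asymptotic y x"
  unfolding asymptotic_def by (simp add: dist_X_commute)

lemma dist_X_less_imp_eq:
  assumes "dist_X a b < (1/2) ^ M"
  shows "a M = b M"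
proof (rule ccontr)
  assume ne: "a M \<noteq> b M"
  then have "a \<noteq> b" by auto
  then have "(1/2::real) ^ (LEAST i. a i \<noteq> b i) < (1/2) ^ M"
    using assms by (simp add: dist_X_def)
  then have "M < (LEAST i. a i \<noteq> b i)"
    using power_strict_decreasing_iff[of "1/2::real"] by simp
  then show False using ne not_less_Least by blast
qed

lemma asymptotic_eventually_eq:
  assumes "asymptotic x y"
  shows "\<forall>\<^sub>F k in sequentially. (T ^^ k) x M = (T ^^ k) y M"
proof -
  have "\<forall>\<^sub>F k in sequentially. dist_X ((T ^^ k) x) ((T ^^ k) y) < (1/2) ^ M"
    using assms unfolding asymptotic_def by (rule order_tendstoD) simp
  then show ?thesis by (rule eventually_mono) (rule dist_X_less_imp_eq)
qed

lemma not_asymptotic_if_orbit_root: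
  assumes x: "x \<in> X" "eventual_cycle x d" and y: "\<forall>k. (T ^^ k) y (Suc d) = (0,0)"
  shows "\<not> asymptotic x y"
proof
  assume "asymptotic x y"
  then have "\<forall>\<^sub>F k in sequentially. (T ^^ k) x (Suc d) = (T ^^ k) y (Suc d)"
    by (rule asymptotic_eventually_eq)
  then obtain K where K: "\<forall>k\<ge>K. (T ^^ k) x (Suc d) = (T ^^ k) y (Suc d)"
    unfolding eventually_sequentially by blast
  obtain k where "(T ^^ k) ((T ^^ K) x) (Suc d) \<noteq> (0,0)"
    using eventual_cycle_orbit_leaves_root[OF funpow_T_in_X[OF x(1)] eventual_cycle_funpow_T[OF x]]
    by blast
  then have "(T ^^ (k + K)) x (Suc d) \<noteq> (0,0)" by (simp add: funpow_add)
  then show False using K[rule_format, of "k + K"] y by simp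
qed

lemma not_asymptotic_p_pt:
  assumes "x \<in> X" "x \<noteq> p_pt"
  shows "\<not> asymptotic x p_pt"
proof -
  obtain d where "eventual_cycle x d" using eventual_cycle_exists assms by blast
  moreover have "\<forall>k. (T ^^ k) p_pt (Suc d) = (0,0)"
    unfolding funpow_T_p_pt by (simp add: p_pt_def)
  ultimately show ?thesis using not_asymptotic_if_orbit_root assms(1) by blast
qed

lemma asymptotic_eventual_cycle_le:
  assumes "x \<in> X" "y \<in> X" "eventual_cycle x d" "eventual_cycle y e" "asymptotic x y"
  shows "e \<le> Suc d"
proof (rule ccontr)
  assume "\<not> e \<le> Suc d"
  then have "\<forall>k. (T ^^ k) y (Suc d) = (0,0)"
    using eventual_cycle_root_below[OF funpow_T_in_X[OF assms(2)] eventual_cycle_funpow_T[OF assms(2,4)]]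
    by simp
  then show False using not_asymptotic_if_orbit_root[OF assms(1,3)] assms(5) by blast
qed

lemma asymptotic_deg_bound:
  assumes x: "x \<in> X" and y: "y \<in> X" and "x \<noteq> y" and xy: "asymptotic x y"
  shows "deg x \<noteq> \<infinity> \<and> deg y \<noteq> \<infinity> \<and> \<bar>int (the_enat (deg x)) - int (the_enat (deg y))\<bar> \<le> 1"
proof -
  have "x \<noteq> p_pt" "y \<noteq> p_pt"
    using assms not_asymptotic_p_pt asymptotic_sym by blast+
  then obtain d e where d: "eventual_cycle x d" and e: "eventual_cycle y e"
    using eventual_cycle_exists x y by blast
  have "e \<le> Suc d" "d \<le> Suc e"
    using asymptotic_eventual_cycle_le x y d e xy asymptotic_sym by blast+
  then show ?thesis using deg_eq_eventual_cycle[OF x d] deg_eq_eventual_cycle[OF y e] by simp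
qed

theorem corollary3p10:
  shows "(\<forall>x y. x \<in> X \<longrightarrow> y \<in> X \<longrightarrow> x \<noteq> y \<longrightarrow> asymptotic x y \<longrightarrow>
            deg x \<noteq> \<infinity> \<and> deg y \<noteq> \<infinity> \<and>
            \<bar>int (the_enat (deg x)) - int (the_enat (deg y))\<bar> \<le> 1)
       \<and> (\<forall>x \<in> X. x \<noteq> p_pt \<longrightarrow> \<not> asymptotic x p_pt)"
  using asymptotic_deg_bound not_asymptotic_p_pt by blast

end
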